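(* If $N_1,N_2,N_3$ are feasible perfect negators, then $G=\operatorname{NNN}(N_1,N_2,N_3)$ is a bicritical snark.
   Context: A multipole consists of vertices and edges; each edge has two ends, each either at a vertex or free (a semiedge); all multipoles are cubic. Let $\mathbb{K}=\{(0,1),(1,0),(1,1)\}\subset\mathbb{Z}_2\times\mathbb{Z}_2$. A colouring of a multipole assigns elements of $\mathbb{K}$ to edges so that the three edge ends at each vertex get distinct colours. A snark is a connected cubic graph with no colouring. For distinct vertices $x,y$ of a graph $G$, $G-\{x,y\}$ is the multipole obtained by deleting $x,y$ (edges to other vertices become dangling edges; an edge $xy$, if present, is kept as an isolated edge). A snark is bicritical if $G-\{x,y\}$ is colourable for all distinct vertices $x,y$. Negator: for a snark $H$ of girth at least $5$ and a path $uwv$ in $H$, $N=\operatorname{Neg}(H;u,v)$ is the $(2,2,1)$-pole $N(I,O,r)$ obtained by deleting $u,w,v$, with $I=\{i_1,i_2\}$ the semiedges formerly at $u$, $O=\{o_1,o_2\}$ those formerly at $v$, and $r$ the one formerly at $w$. $N$ is perfect if the set of tuples $(\varphi(i_1),\varphi(i_2),\varphi(o_1),\varphi(o_2),\varphi(r))$ over its colourings equals $\{(z,z,a,b,a+b),(a,b,z,z,a+b): z,a,b\in\mathbb{K}, a\ne b\}$. $N$ is feasible if (0) $H-\{x,y\}$ is colourable for all distinct $x,y\in V(N)$; (i) for every $x\in\{u,v\}$ and $y\in V(N)$ and any two dangling edges $e,f$ of the $6$-pole $H-\{x,y\}$ formerly incident with $x$, there is a colouring $\varphi$ of $H-\{x,y\}$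 with $\varphi(e)=\varphi(f)$; (ii) for every vertex $y\in V(N)$ there exist colourings $\varphi,\psi$ of the $8$-pole $N-y$ (delete $y$, its edges become dangling) with $\varphi(i_1,i_2,o_1,o_2,r)=(a,a,b,b,a)$ and $\psi(i_1,i_2,o_1,o_2,r)=(a,a,b,b,b)$ for some $a,b\in\mathbb{K}$ with $a\ne b$. For negators $N_j(I_j,O_j,r_j)$, $j=1,2,3$, $\operatorname{NNN}(N_1,N_2,N_3)$ is the cubic graph obtained by performing the junctions (identifying free ends in pairs along arbitrary bijections) of $O_1$ with $I_2$, $O_2$ with $I_3$, $O_3$ with $I_1$, and adding a new vertex incident with $r_1,r_2,r_3$. *)

theory Defs
  imports Main "HOL-Library.Z2" "HOL-Library.Product_Plus"
begin

type_synonym colour = "bit \<times> bit"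

definition KK :: "colour set" where
  "KK = {(0,1), (1,0), (1,1)}"

text \<open>A multipole has a vertex set, an edge set, and for every edge e and each of its
two ends (indexed by a boolean) either the vertex the end is attached to (Some v)
or None if the end is free.\<close>

record ('v, 'e) multipole =
  verts :: "'v set"
  edges :: "'e set"
  endpt :: "'e \<Rightarrow> bool \<Rightarrow> 'v option"

definition ends_at :: "('v, 'e) multipole \<Rightarrow> 'v \<Rightarrow> ('e \<times> bool) set" where
  "ends_at M x = {(e, b). e \<in> edges M \<and> endpt M e b = Some x}"

definition incident :: "('v, 'e) multipole \<Rightarrow> 'e \<Rightarrow> 'v \<Rightarrow> bool" where
  "incident M e x \<longleftrightarrow> e \<in> edges M \<and> (\<exists>b. endpt M e b = Some x)"

definition is_multipole :: "('v, 'e) multipole \<Rightarrow> bool" where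
  "is_multipole M \<longleftrightarrow> finite (verts M) \<and> finite (edges M) \<and>
     (\<forall>e\<in>edges M. \<forall>b. endpt M e b = None \<or> the (endpt M e b) \<in> verts M) \<and>
     (\<forall>x\<in>verts M. card (ends_at M x) = 3)"

definition is_graph :: "('v, 'e) multipole \<Rightarrow> bool" where
  "is_graph M \<longleftrightarrow> is_multipole M \<and> (\<forall>e\<in>edges M. \<forall>b. endpt M e b \<noteq> None)"

definition adj :: "('v, 'e) multipole \<Rightarrow> 'v \<Rightarrow> 'v \<Rightarrow> bool" where
  "adj M x y \<longleftrightarrow> (\<exists>e\<in>edges M. endpt M e True = Some x \<and> endpt M e False = Some y
                              \<or> endpt M e True = Some y \<and> endpt M e False = Some x)"

definition connected_graph :: "('v, 'e) multipole \<Rightarrow> bool" where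
  "connected_graph M \<longleftrightarrow> verts M \<noteq> {} \<and>
     (\<forall>x\<in>verts M. \<forall>y\<in>verts M. (x, y) \<in> {(a, b). adj M a b}\<^sup>*)"

definition is_colouring :: "('v, 'e) multipole \<Rightarrow> ('e \<Rightarrow> colour) \<Rightarrow> bool" where
  "is_colouring M \<phi> \<longleftrightarrow> (\<forall>e\<in>edges M. \<phi> e \<in> KK) \<and>
     (\<forall>x\<in>verts M. inj_on (\<lambda>(e, b). \<phi> e) (ends_at M x))"

definition colourable :: "('v, 'e) multipole \<Rightarrow> bool" where
  "colourable M \<longleftrightarrow> (\<exists>\<phi>. is_colouring M \<phi>)"

definition snark :: "('v, 'e) multipole \<Rightarrow> bool" where
  "snark G \<longleftrightarrow> is_graph G \<and> connected_graph G \<and> \<not> colourable G"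

text \<open>Deleting a set of vertices: all edges are kept; ends at deleted vertices
become free (so an edge between two deleted vertices becomes an isolated edge).\<close>
definition del_verts :: "('v, 'e) multipole \<Rightarrow> 'v set \<Rightarrow> ('v, 'e) multipole" where
  "del_verts M S = \<lparr> verts = verts M - S, edges = edges M,
     endpt = (\<lambda>e b. case endpt M e b of None \<Rightarrow> None
                     | Some x \<Rightarrow> (if x \<in> S then None else Some x)) \<rparr>"

definition bicritical :: "('v, 'e) multipole \<Rightarrow> bool" where
  "bicritical G \<longleftrightarrow> snark G \<and>
     (\<forall>x\<in>verts G. \<forall>y\<in>verts G. x \<noteq> y \<longrightarrow> colourable (del_verts G {x, y}))"

definition girth_ge_5 :: "('v, 'e) multipole \<Rightarrow> bool" where
  "girth_ge_5 G \<longleftrightarrow>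
     (\<forall>e\<in>edges G. endpt G e True \<noteq> endpt G e False) \<and>
     (\<forall>e\<in>edges G. \<forall>f\<in>edges G. e \<noteq> f \<longrightarrow>
         {endpt G e True, endpt G e False} \<noteq> {endpt G f True, endpt G f False}) \<and>
     (\<forall>a b c. distinct [a, b, c] \<longrightarrow> \<not> (adj G a b \<and> adj G b c \<and> adj G c a)) \<and>
     (\<forall>a b c d. distinct [a, b, c, d] \<longrightarrow>
         \<not> (adj G a b \<and> adj G b c \<and> adj G c d \<and> adj G d a))"

text \<open>A negator is given by its host snark H, a path u w v in H and a labelling
of its semiedges: i1, i2 (formerly at u), o1, o2 (formerly at v), r (formerly at w).\<close>

record ('v, 'e) negator =
  host :: "('v, 'e) multipole"
  nu :: 'v
  nw :: 'v
  nv :: 'v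
  ni1 :: 'e
  ni2 :: 'e
  no1 :: 'e
  no2 :: 'e
  nr :: 'e

definition inside :: "('v, 'e) multipole \<Rightarrow> 'v set \<Rightarrow> 'e \<Rightarrow> bool" where
  "inside M S e \<longleftrightarrow> (\<forall>b. \<exists>x\<in>S. endpt M e b = Some x)"

text \<open>The multipole N = Neg(H;u,v): delete u, w, v (and the edges uw, wv between them).\<close>
definition neg_pole :: "('v, 'e) negator \<Rightarrow> ('v, 'e) multipole" where
  "neg_pole N = (let H = host N; S = {nu N, nw N, nv N}; D = del_verts H S in
     D\<lparr> edges := {e \<in> edges H. \<not> inside H S e} \<rparr>)"

definition is_negator :: "('v, 'e) negator \<Rightarrow> bool" where
  "is_negator N \<longleftrightarrow> (let H = host N; S = {nu N, nw N, nv N} in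
     snark H \<and> girth_ge_5 H \<and>
     nu N \<in> verts H \<and> nw N \<in> verts H \<and> nv N \<in> verts H \<and>
     distinct [nu N, nw N, nv N] \<and> adj H (nu N) (nw N) \<and> adj H (nw N) (nv N) \<and>
     ni1 N \<noteq> ni2 N \<and> no1 N \<noteq> no2 N \<and>
     {ni1 N, ni2 N} = {e. incident H e (nu N) \<and> \<not> inside H S e} \<and>
     {no1 N, no2 N} = {e. incident H e (nv N) \<and> \<not> inside H S e} \<and>
     {nr N} = {e. incident H e (nw N) \<and> \<not> inside H S e})"

definition tuple :: "('v, 'e) negator \<Rightarrow> ('e \<Rightarrow> colour) \<Rightarrow> colour \<times> colour \<times> colour \<times> colour \<times> colour" where
  "tuple N \<phi> = (\<phi> (ni1 N), \<phi> (ni2 N), \<phi> (no1 N), \<phi> (no2 N), \<phi> (nr N))"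

definition perfect :: "('v, 'e) negator \<Rightarrow> bool" where
  "perfect N \<longleftrightarrow>
     {tuple N \<phi> | \<phi>. is_colouring (neg_pole N) \<phi>} =
     {(z, z, a, b, a + b) | z a b. z \<in> KK \<and> a \<in> KK \<and> b \<in> KK \<and> a \<noteq> b} \<union>
     {(a, b, z, z, a + b) | z a b. z \<in> KK \<and> a \<in> KK \<and> b \<in> KK \<and> a \<noteq> b}"

definition feasible :: "('v, 'e) negator \<Rightarrow> bool" where
  "feasible N \<longleftrightarrow> (let H = host N; VN = verts (neg_pole N) in
     (\<forall>x\<in>VN. \<forall>y\<in>VN. x \<noteq> y \<longrightarrow> colourable (del_verts H {x, y})) \<and>
     (\<forall>x\<in>{nu N, nv N}. \<forall>y\<in>VN. \<forall>e f. e \<noteq> f \<and> incident H e x \<and> incident H f x \<longrightarrow>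
        (\<exists>\<phi>. is_colouring (del_verts H {x, y}) \<phi> \<and> \<phi> e = \<phi> f)) \<and>
     (\<forall>y\<in>VN. \<exists>\<phi> \<psi> a b. a \<in> KK \<and> b \<in> KK \<and> a \<noteq> b \<and>
        is_colouring (del_verts (neg_pole N) {y}) \<phi> \<and> tuple N \<phi> = (a, a, b, b, a) \<and>
        is_colouring (del_verts (neg_pole N) {y}) \<psi> \<and> tuple N \<psi> = (a, a, b, b, b)))"

text \<open>Disjoint union of three multipoles; the new vertex will be None.\<close>
definition union3 :: "('v1, 'e1) multipole \<Rightarrow> ('v2, 'e2) multipole \<Rightarrow> ('v3, 'e3) multipole
    \<Rightarrow> (('v1 + 'v2 + 'v3) option, 'e1 + 'e2 + 'e3) multipole" where
  "union3 M1 M2 M3 = \<lparr>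
     verts = (Some \<circ> Inl) ` verts M1 \<union> (Some \<circ> Inr \<circ> Inl) ` verts M2 \<union> (Some \<circ> Inr \<circ> Inr) ` verts M3,
     edges = Inl ` edges M1 \<union> (Inr \<circ> Inl) ` edges M2 \<union> (Inr \<circ> Inr) ` edges M3,
     endpt = (\<lambda>d c. case d of
         Inl e \<Rightarrow> map_option (Some \<circ> Inl) (endpt M1 e c)
       | Inr (Inl e) \<Rightarrow> map_option (Some \<circ> Inr \<circ> Inl) (endpt M2 e c)
       | Inr (Inr e) \<Rightarrow> map_option (Some \<circ> Inr \<circ> Inr) (endpt M3 e c)) \<rparr>"

definition vend :: "('v, 'e) multipole \<Rightarrow> 'e \<Rightarrow> 'v option" where
  "vend M f = (if endpt M f True = None then endpt M f False else endpt M f True)"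

text \<open>Junction of two dangling edges e and f: they are merged into a single edge
(kept under the name e) joining their vertex ends.\<close>
definition junction :: "('v, 'e) multipole \<Rightarrow> 'e \<Rightarrow> 'e \<Rightarrow> ('v, 'e) multipole" where
  "junction M e f = \<lparr> verts = verts M, edges = edges M - {f},
     endpt = (\<lambda>d c. if d = e \<and> endpt M e c = None then vend M f else endpt M d c) \<rparr>"

definition add_vertex :: "('v, 'e) multipole \<Rightarrow> 'v \<Rightarrow> 'e set \<Rightarrow> ('v, 'e) multipole" where
  "add_vertex M x R = \<lparr> verts = insert x (verts M), edges = edges M,
     endpt = (\<lambda>d c. if d \<in> R \<and> endpt M d c = None then Some x else endpt M d c) \<rparr>"

text \<open>NNN(N1,N2,N3): junction of O1 with I2, O2 with I3, O3 with I1 (the bijections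
being given by the labellings: o_{j,k} is joined with i_{j+1,k}), plus a new vertex
incident with r1, r2, r3.\<close>
definition NNN :: "('v1, 'e1) negator \<Rightarrow> ('v2, 'e2) negator \<Rightarrow> ('v3, 'e3) negator
    \<Rightarrow> (('v1 + 'v2 + 'v3) option, 'e1 + 'e2 + 'e3) multipole" where
  "NNN N1 N2 N3 = (let
     U = union3 (neg_pole N1) (neg_pole N2) (neg_pole N3);
     e1 = (\<lambda>x. Inl x); e2 = (\<lambda>x. Inr (Inl x)); e3 = (\<lambda>x. Inr (Inr x));
     J = junction (junction (junction (junction (junction (junction U
            (e1 (no1 N1)) (e2 (ni1 N2)))
            (e1 (no2 N1)) (e2 (ni2 N2)))
            (e2 (no1 N2)) (e3 (ni1 N3)))
            (e2 (no2 N2)) (e3 (ni2 N3)))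
            (e3 (no1 N3)) (e1 (ni1 N1)))
            (e3 (no2 N3)) (e1 (ni2 N1))
   in add_vertex J None {e1 (nr N1), e2 (nr N2), e3 (nr N3)})"

end

theory Submission
  imports Defs
begin

(*
  A colouring of NNN(N1, N2, N3) restricts to colourings of the three negators. By perfection,
  exactly one side, I or O, of every negator is monochromatic; since O_j is joined to I_(j+1),
  the property "I_j is monochromatic" would have to alternate around a cycle of length three.
  Hence the graph is uncolourable.

  Deleting vertices x and y leaves a colourable multipole as soon as boundary tuples of N1, N2, N3
  can be chosen that agree across the junctions and, unless the new vertex was deleted, have
  distinct r-colours. Every negator still realises all perfect tuples, and feasibility provides
  the remaining ones: (a, a, b, b, a) and (a, a, b, b, b) when one vertex of N is deleted
  (condition (ii) followed by a permutation of colours); (p, p, c, d, r) with r in {c, d} from a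
  colouring of the host without u and y (condition (i)); and, from a colouring of the host without
  x and y (condition (0)), a tuple (a, b, c, d, a + b + c + d) with a + b <> c + d, obtained by
  reading off the colours around the path u w v.

  Connectivity then comes for free: for p and q in different components, a colouring of G minus q
  and a neighbour of q, used on the component of p, and a colouring of G minus p and a neighbour
  of p, used elsewhere, would combine into a colouring of G.
*)

lemma KK_iff: "x \<in> KK \<longleftrightarrow> x = (0, 1) \<or> x = (1, 0) \<or> x = (1, 1)"
  by (simp add: KK_def)

lemma KK_eq_insert: "a \<in> KK \<Longrightarrow> b \<in> KK \<Longrightarrow> a \<noteq> b \<Longrightarrow> KK = {a, b, a + b}"
  unfolding KK_iff by (auto simp: zero_prod_def KK_def)

lemma KK_add: "a \<in> KK \<Longrightarrow> b \<in> KK \<Longrightarrow> a \<noteq> b \<Longrightarrow> a + b \<in> KK \<and> a + b \<noteq> a \<and> a + b \<noteq> b"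
  unfolding KK_iff by (auto simp: zero_prod_def)

lemma KK_add_ne_right: "a \<in> KK \<Longrightarrow> a + b \<noteq> b"
  unfolding KK_iff by (cases b) (auto simp: zero_prod_def)

lemma KK_third_eq_add:
  "a \<in> KK \<Longrightarrow> b \<in> KK \<Longrightarrow> c \<in> KK \<Longrightarrow> a \<noteq> b \<Longrightarrow> c \<noteq> a \<Longrightarrow> c \<noteq> b \<Longrightarrow> c = a + b"
  using KK_eq_insert by blast

lemma KK_permutation_exists:
  assumes "a0 \<in> KK" "b0 \<in> KK" "a0 \<noteq> b0" "a \<in> KK" "b \<in> KK" "a \<noteq> b"
  obtains \<sigma> where "inj_on \<sigma> KK" "\<sigma> ` KK \<subseteq> KK" "\<sigma> a0 = a" "\<sigma> b0 = b"
proof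
  define \<sigma> where "\<sigma> x = (if x = a0 then a else if x = b0 then b else a + b)" for x
  show "\<sigma> a0 = a" "\<sigma> b0 = b"
    using assms(3) by (auto simp: \<sigma>_def)
  show "inj_on \<sigma> KK"
    unfolding KK_eq_insert[OF assms(1-3)]
    using KK_add[OF assms(1-3)] KK_add[OF assms(4-6)] assms(3,6) by (auto simp: \<sigma>_def inj_on_def)
  show "\<sigma> ` KK \<subseteq> KK"
    using KK_eq_insert[OF assms(4-6)] by (auto simp: \<sigma>_def)
qed

section \<open>Colourings of multipoles with deleted vertices\<close>

definition colouring_off :: "('v, 'e) multipole \<Rightarrow> 'v set \<Rightarrow> ('e \<Rightarrow> colour) \<Rightarrow> bool" where
  "colouring_off M D \<phi> \<longleftrightarrow> (\<forall>e\<in>edges M. \<phi> e \<in> KK) \<and>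
     (\<forall>x\<in>verts M. x \<notin> D \<longrightarrow> inj_on (\<lambda>(e, b). \<phi> e) (ends_at M x))"

lemma endpt_in_verts:
  "is_multipole M \<Longrightarrow> d \<in> edges M \<Longrightarrow> endpt M d c = Some x \<Longrightarrow> x \<in> verts M"
  unfolding is_multipole_def by (metis option.distinct(1) option.sel)

lemma verts_del_verts [simp]: "verts (del_verts M D) = verts M - D"
  and edges_del_verts [simp]: "edges (del_verts M D) = edges M"
  by (simp_all add: del_verts_def)

lemma ends_at_del_verts: "x \<notin> D \<Longrightarrow> ends_at (del_verts M D) x = ends_at M x"
  by (auto simp: ends_at_def del_verts_def split: option.splits if_splits)

lemma is_colouring_del_verts_iff: "is_colouring (del_verts M D) \<phi> \<longleftrightarrow> colouring_off M D \<phi>"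
  by (auto simp: is_colouring_def colouring_off_def ends_at_del_verts)

lemma colourable_del_verts_iff: "colourable (del_verts M D) \<longleftrightarrow> (\<exists>\<phi>. colouring_off M D \<phi>)"
  by (simp add: colourable_def is_colouring_del_verts_iff)

lemma is_colouring_iff_colouring_off_empty: "is_colouring M \<phi> \<longleftrightarrow> colouring_off M {} \<phi>"
  by (simp add: is_colouring_def colouring_off_def)

lemma colouring_off_mono: "colouring_off M D \<phi> \<Longrightarrow> D \<inter> verts M \<subseteq> D' \<Longrightarrow> colouring_off M D' \<phi>"
  by (auto simp: colouring_off_def)

lemma colouring_off_KK: "colouring_off M D \<phi> \<Longrightarrow> e \<in> edges M \<Longrightarrow> \<phi> e \<in> KK"
  by (simp add: colouring_off_def)

lemma colouring_off_ne:
  assumes "colouring_off M D \<phi>" "x \<in> verts M - D" "incident M e x" "incident M f x" "e \<noteq> f"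
  shows "\<phi> e \<noteq> \<phi> f"
proof
  assume eq: "\<phi> e = \<phi> f"
  obtain b b' where "(e, b) \<in> ends_at M x" "(f, b') \<in> ends_at M x"
    using assms(3,4) by (auto simp: incident_def ends_at_def)
  moreover have "inj_on (\<lambda>(e, b). \<phi> e) (ends_at M x)"
    using assms(1,2) by (simp add: colouring_off_def)
  ultimately show False
    using eq assms(5) inj_onD[of "\<lambda>(e, b). \<phi> e" "ends_at M x" "(e, b)" "(f, b')"] by auto
qed

lemma colouring_off_third_eq_add:
  assumes "colouring_off M D \<phi>" "x \<in> verts M - D"
    and "incident M e1 x" "incident M e2 x" "incident M e3 x" "distinct [e1, e2, e3]"
  shows "\<phi> e1 \<noteq> \<phi> e2 \<and> \<phi> e3 = \<phi> e1 + \<phi> e2"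
proof -
  have "\<phi> e1 \<in> KK" "\<phi> e2 \<in> KK" "\<phi> e3 \<in> KK"
    using assms(3-5) colouring_off_KK[OF assms(1)] by (auto simp: incident_def)
  moreover have "\<phi> e1 \<noteq> \<phi> e2" "\<phi> e3 \<noteq> \<phi> e1" "\<phi> e3 \<noteq> \<phi> e2"
    using colouring_off_ne[OF assms(1,2)] assms(3-6) by auto
  ultimately show ?thesis
    using KK_third_eq_add by blast
qed

lemma colouring_off_comp:
  assumes "colouring_off M D \<phi>" "inj_on \<sigma> KK" "\<sigma> ` KK \<subseteq> KK"
  shows "colouring_off M D (\<sigma> \<circ> \<phi>)"
proof -
  have comp_eq: "\<sigma> \<circ> (\<lambda>(e, b). \<phi> e) = (\<lambda>(e, b). (\<sigma> \<circ> \<phi>) e)"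
    by auto
  have "inj_on (\<lambda>(e, b). (\<sigma> \<circ> \<phi>) e) (ends_at M x)" if "x \<in> verts M - D" for x
    unfolding comp_eq[symmetric]
  proof (rule comp_inj_on)
    show "inj_on (\<lambda>(e, b). \<phi> e) (ends_at M x)"
      using assms(1) that by (simp add: colouring_off_def)
    have "(\<lambda>(e, b). \<phi> e) ` ends_at M x \<subseteq> KK"
      using assms(1) by (auto simp: colouring_off_def ends_at_def)
    then show "inj_on \<sigma> ((\<lambda>(e, b). \<phi> e) ` ends_at M x)"
      using assms(2) by (rule inj_on_subset[rotated])
  qed
  then show ?thesis
    using assms by (auto simp: colouring_off_def)
qed

section \<open>Junctions, new vertices and disjoint unions\<close>

definition dangling :: "('v, 'e) multipole \<Rightarrow> 'e \<Rightarrow> bool" where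
  "dangling M d \<longleftrightarrow> d \<in> edges M \<and> (\<exists>c. endpt M d c = None \<and> endpt M d (\<not> c) \<noteq> None)"

definition free_end :: "('v, 'e) multipole \<Rightarrow> 'e \<Rightarrow> bool" where
  "free_end M d \<longleftrightarrow> endpt M d True = None"

definition free_edges :: "('v, 'e) multipole \<Rightarrow> 'e set" where
  "free_edges M = {d \<in> edges M. \<exists>c. endpt M d c = None}"

lemma dangling_endpt_eq_None_iff:
  assumes "dangling M d"
  shows "endpt M d c = None \<longleftrightarrow> c = free_end M d"
proof -
  obtain c0 where "endpt M d c0 = None" "endpt M d (\<not> c0) \<noteq> None"
    using assms by (auto simp: dangling_def)
  then show ?thesis
    by (cases c; cases c0) (auto simp: free_end_def)
qed

lemma vend_eq: "vend M d = endpt M d (\<not> free_end M d)"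
  by (simp add: vend_def free_end_def)

lemma is_graph_iff_free_edges: "is_graph M \<longleftrightarrow> is_multipole M \<and> free_edges M = {}"
  by (auto simp: is_graph_def free_edges_def)

lemma verts_junction [simp]: "verts (junction M e f) = verts M"
  and edges_junction [simp]: "edges (junction M e f) = edges M - {f}"
  by (simp_all add: junction_def)

lemma endpt_junction_other: "d \<noteq> e \<Longrightarrow> endpt (junction M e f) d = endpt M d"
  by (auto simp: junction_def)

lemma dangling_junction_iff: "d \<noteq> e \<Longrightarrow> d \<noteq> f \<Longrightarrow> dangling (junction M e f) d \<longleftrightarrow> dangling M d"
  by (simp add: dangling_def endpt_junction_other)

context
  fixes M :: "('v, 'e) multipole" and e f :: 'e
  assumes e: "dangling M e" and f: "dangling M f" and ef: "e \<noteq> f"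
begin

lemma endpt_junction:
  "endpt (junction M e f) d c =
     (if d = e \<and> c = free_end M e then endpt M f (\<not> free_end M f) else endpt M d c)"
  using dangling_endpt_eq_None_iff[OF e] by (auto simp: junction_def vend_eq)

lemma mem_ends_at_junction:
  "(d, c) \<in> ends_at (junction M e f) x \<longleftrightarrow>
     (d, c) = (e, free_end M e) \<and> (f, \<not> free_end M f) \<in> ends_at M x \<or> (d, c) \<in> ends_at M x \<and> d \<noteq> f"
  using dangling_endpt_eq_None_iff[OF e, of c] e f ef
  by (auto simp: ends_at_def endpt_junction dangling_def)

lemma bij_betw_ends_at_junction:
  "bij_betw (\<lambda>(d, b). if d = f then (e, free_end M e) else (d, b))
     (ends_at M x) (ends_at (junction M e f) x)"
  (is "bij_betw ?g ?A ?B")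
proof -
  have e_end: "(e, free_end M e) \<notin> ?A"
    using dangling_endpt_eq_None_iff[OF e, of "free_end M e"] by (simp add: ends_at_def)
  have f_end: "b = (\<not> free_end M f)" if "(f, b) \<in> ?A" for b
    using that dangling_endpt_eq_None_iff[OF f, of b] by (auto simp: ends_at_def)
  have "inj_on ?g ?A"
  proof (rule inj_onI)
    fix p q assume "p \<in> ?A" "q \<in> ?A" "?g p = ?g q"
    then show "p = q"
      using e_end f_end by (cases p; cases q) (auto split: if_splits)
  qed
  moreover have "?g ` ?A = ?B"
  proof
    show "?g ` ?A \<subseteq> ?B"
      using f_end by (auto simp: mem_ends_at_junction)
    show "?B \<subseteq> ?g ` ?A"
    proof
      fix p assume "p \<in> ?B"
      then consider "p = (e, free_end M e)" "(f, \<not> free_end M f) \<in> ?A" | "p \<in> ?A" "fst p \<noteq> f"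
        by (cases p) (auto simp: mem_ends_at_junction)
      then show "p \<in> ?g ` ?A"
      proof cases
        case 1
        then show ?thesis by (auto intro: rev_image_eqI[of "(f, \<not> free_end M f)"])
      next
        case 2
        then have "p = ?g p" by (cases p) auto
        with 2 show ?thesis by (blast intro: image_eqI)
      qed
    qed
  qed
  ultimately show ?thesis
    by (simp add: bij_betw_def)
qed

lemma colouring_off_junction:
  "colouring_off (junction M e f) D \<phi> \<longleftrightarrow> colouring_off M D (\<phi>(f := \<phi> e))"
proof -
  let ?g = "\<lambda>(d, b). if d = f then (e, free_end M e) else (d, b)"
  have "inj_on (\<lambda>(d, b). \<phi> d) (ends_at (junction M e f) x) \<longleftrightarrow>
      inj_on (\<lambda>(d, b). (\<phi>(f := \<phi> e)) d) (ends_at M x)" for x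
  proof -
    have "(\<lambda>(d, b). \<phi> d) \<circ> ?g = (\<lambda>(d, b). (\<phi>(f := \<phi> e)) d)"
      by (auto simp: fun_eq_iff)
    then show ?thesis
      using bij_betw_ends_at_junction[of x] comp_inj_on_iff[of ?g "ends_at M x" "\<lambda>(d, b). \<phi> d"]
      by (simp add: bij_betw_def)
  qed
  moreover have "(\<forall>d\<in>edges M - {f}. \<phi> d \<in> KK) \<longleftrightarrow> (\<forall>d\<in>edges M. (\<phi>(f := \<phi> e)) d \<in> KK)"
    using e ef by (auto simp: dangling_def)
  ultimately show ?thesis
    by (simp add: colouring_off_def)
qed

lemma is_multipole_junction: "is_multipole M \<Longrightarrow> is_multipole (junction M e f)"
proof -
  assume M: "is_multipole M"
  have "card (ends_at (junction M e f) x) = card (ends_at M x)" for x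
    using bij_betw_same_card[OF bij_betw_ends_at_junction[of x]] by simp
  moreover have "endpt M f (\<not> free_end M f) = None \<or> the (endpt M f (\<not> free_end M f)) \<in> verts M"
    using M f by (auto simp: is_multipole_def dangling_def)
  ultimately show ?thesis
    using M by (auto simp: is_multipole_def endpt_junction)
qed

lemma free_edges_junction: "free_edges (junction M e f) = free_edges M - {e, f}"
proof -
  have e_joined: "endpt (junction M e f) e c \<noteq> None" for c
    using dangling_endpt_eq_None_iff[OF e, of "\<not> free_end M e"]
      dangling_endpt_eq_None_iff[OF f, of "\<not> free_end M f"]
    by (auto simp: endpt_junction)
  show ?thesis
  proof (rule set_eqI)
    fix d
    show "d \<in> free_edges (junction M e f) \<longleftrightarrow> d \<in> free_edges M - {e, f}"
      using e_joined by (cases "d = e") (auto simp: free_edges_def endpt_junction_other)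
  qed
qed

end

lemma verts_add_vertex [simp]: "verts (add_vertex M z R) = insert z (verts M)"
  and edges_add_vertex [simp]: "edges (add_vertex M z R) = edges M"
  by (simp_all add: add_vertex_def)

lemma endpt_add_vertex:
  "endpt (add_vertex M z R) d c = (if d \<in> R \<and> endpt M d c = None then Some z else endpt M d c)"
  by (simp add: add_vertex_def)

lemma ends_at_add_vertex_other: "x \<noteq> z \<Longrightarrow> ends_at (add_vertex M z R) x = ends_at M x"
  by (auto simp: ends_at_def add_vertex_def)

lemma free_edges_add_vertex: "free_edges (add_vertex M z R) = free_edges M - R"
proof -
  have "endpt (add_vertex M z R) r c \<noteq> None" if "r \<in> R" for r c
    using that by (simp add: endpt_add_vertex)
  then show ?thesis
    by (auto simp: free_edges_def endpt_add_vertex)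
qed

context
  fixes M :: "('v, 'e) multipole" and z :: 'v and R :: "'e set"
  assumes M: "is_multipole M" and z: "z \<notin> verts M" and R: "\<forall>r\<in>R. dangling M r"
begin

lemma ends_at_add_vertex_new: "ends_at (add_vertex M z R) z = (\<lambda>r. (r, free_end M r)) ` R"
proof -
  have free: "endpt M r c = None \<longleftrightarrow> c = free_end M r" if "r \<in> R" for r c
    using dangling_endpt_eq_None_iff[OF R[rule_format, OF that]] .
  have "(d, c) \<in> ends_at (add_vertex M z R) z \<longleftrightarrow> d \<in> R \<and> c = free_end M d" for d c
  proof
    assume "(d, c) \<in> ends_at (add_vertex M z R) z"
    then have "d \<in> R" "endpt M d c = None"
      using endpt_in_verts[OF M] z by (auto simp: ends_at_def endpt_add_vertex split: if_splits)
    then show "d \<in> R \<and> c = free_end M d"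
      using free by blast
  next
    assume "d \<in> R \<and> c = free_end M d"
    then show "(d, c) \<in> ends_at (add_vertex M z R) z"
      using R free by (auto simp: ends_at_def endpt_add_vertex dangling_def)
  qed
  then show ?thesis
    by auto
qed

lemma colouring_off_add_vertex:
  "colouring_off (add_vertex M z R) D \<phi> \<longleftrightarrow> colouring_off M D \<phi> \<and> (z \<notin> D \<longrightarrow> inj_on \<phi> R)"
proof -
  have new: "inj_on (\<lambda>(e, b). \<phi> e) (ends_at (add_vertex M z R) z) \<longleftrightarrow> inj_on \<phi> R"
    unfolding ends_at_add_vertex_new by (auto simp: inj_on_def)
  have old: "ends_at (add_vertex M z R) x = ends_at M x" if "x \<in> verts M - D" for x
    using z that by (intro ends_at_add_vertex_other) auto
  have "colouring_off (add_vertex M z R) D \<phi> \<longleftrightarrow> (\<forall>e\<in>edges M. \<phi> e \<in> KK) \<and>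
      (z \<notin> D \<longrightarrow> inj_on (\<lambda>(e, b). \<phi> e) (ends_at (add_vertex M z R) z)) \<and>
      (\<forall>x\<in>verts M - D. inj_on (\<lambda>(e, b). \<phi> e) (ends_at (add_vertex M z R) x))"
    unfolding colouring_off_def by auto
  also have "\<dots> \<longleftrightarrow> colouring_off M D \<phi> \<and> (z \<notin> D \<longrightarrow> inj_on \<phi> R)"
    unfolding colouring_off_def new using old by auto
  finally show ?thesis .
qed

lemma is_multipole_add_vertex:
  assumes "card R = 3"
  shows "is_multipole (add_vertex M z R)"
proof -
  have "card (ends_at (add_vertex M z R) z) = 3"
    using assms by (simp add: ends_at_add_vertex_new card_image inj_on_def)
  moreover have "card (ends_at (add_vertex M z R) x) = 3" if "x \<in> verts M" for x
    using M z that by (metis is_multipole_def ends_at_add_vertex_other)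
  moreover have "endpt (add_vertex M z R) d c = None \<or> the (endpt (add_vertex M z R) d c) \<in> insert z (verts M)"
    if "d \<in> edges M" for d c
    using that by (auto simp: endpt_add_vertex dest: endpt_in_verts[OF M])
  ultimately show ?thesis
    using M by (auto simp: is_multipole_def)
qed

end

lemma verts_union3:
    "verts (union3 M1 M2 M3) =
       (Some \<circ> Inl) ` verts M1 \<union> (Some \<circ> Inr \<circ> Inl) ` verts M2 \<union> (Some \<circ> Inr \<circ> Inr) ` verts M3"
  and edges_union3:
    "edges (union3 M1 M2 M3) = Inl ` edges M1 \<union> (Inr \<circ> Inl) ` edges M2 \<union> (Inr \<circ> Inr) ` edges M3"
  and endpt_union3 [simp]:
    "endpt (union3 M1 M2 M3) (Inl e1) c = map_option (Some \<circ> Inl) (endpt M1 e1 c)"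
    "endpt (union3 M1 M2 M3) (Inr (Inl e2)) c = map_option (Some \<circ> Inr \<circ> Inl) (endpt M2 e2 c)"
    "endpt (union3 M1 M2 M3) (Inr (Inr e3)) c = map_option (Some \<circ> Inr \<circ> Inr) (endpt M3 e3 c)"
  by (auto simp: union3_def)

lemma pair_mem_apfst_image: "(d, c) \<in> apfst k ` A \<longleftrightarrow> (\<exists>e. d = k e \<and> (e, c) \<in> A)"
  by force

lemma ends_at_union3:
    "ends_at (union3 M1 M2 M3) (Some (Inl x1)) = apfst Inl ` ends_at M1 x1"
    "ends_at (union3 M1 M2 M3) (Some (Inr (Inl x2))) = apfst (Inr \<circ> Inl) ` ends_at M2 x2"
    "ends_at (union3 M1 M2 M3) (Some (Inr (Inr x3))) = apfst (Inr \<circ> Inr) ` ends_at M3 x3"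
    "ends_at (union3 M1 M2 M3) None = {}"
  by (auto simp: set_eq_iff pair_mem_apfst_image ends_at_def union3_def split: sum.splits)

lemma inj_on_apfst_if_inj: "inj k \<Longrightarrow> inj_on (apfst k) A"
  by (rule inj_on_subset[of _ UNIV]) simp_all

lemma inj_on_ends_apfst_image:
  assumes "inj k"
  shows "inj_on (\<lambda>(d, b). \<phi> d) (apfst k ` A) \<longleftrightarrow> inj_on (\<lambda>(e, b). (\<phi> \<circ> k) e) A"
proof -
  have "inj_on (\<lambda>(d, b). \<phi> d) (apfst k ` A) \<longleftrightarrow> inj_on ((\<lambda>(d, b). \<phi> d) \<circ> apfst k) A"
    by (rule comp_inj_on_iff[OF inj_on_apfst_if_inj[OF assms]])
  also have "(\<lambda>(d, b). \<phi> d) \<circ> apfst k = (\<lambda>(e, b). (\<phi> \<circ> k) e)"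
    by auto
  finally show ?thesis .
qed

lemma inj_sum_embeddings: "inj Inl" "inj (Inr \<circ> Inl)" "inj (Inr \<circ> Inr)"
  by (simp_all add: inj_def)

lemma colouring_off_union3:
  "colouring_off (union3 M1 M2 M3) D \<phi> \<longleftrightarrow>
     colouring_off M1 {x. Some (Inl x) \<in> D} (\<phi> \<circ> Inl) \<and>
     colouring_off M2 {x. Some (Inr (Inl x)) \<in> D} (\<phi> \<circ> Inr \<circ> Inl) \<and>
     colouring_off M3 {x. Some (Inr (Inr x)) \<in> D} (\<phi> \<circ> Inr \<circ> Inr)"
  unfolding colouring_off_def verts_union3 edges_union3 ball_Un Ball_image_comp
  by (simp add: ends_at_union3 inj_on_ends_apfst_image inj_sum_embeddings comp_assoc) blast

lemma card_apfst_image: "inj k \<Longrightarrow> card (apfst k ` A) = card A"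
  by (simp add: card_image inj_on_apfst_if_inj)

lemma is_multipole_union3:
  assumes "is_multipole M1" "is_multipole M2" "is_multipole M3"
  shows "is_multipole (union3 M1 M2 M3)"
proof -
  have "\<forall>x\<in>verts (union3 M1 M2 M3). card (ends_at (union3 M1 M2 M3) x) = 3"
    using assms unfolding verts_union3 ball_Un Ball_image_comp
    by (simp add: is_multipole_def ends_at_union3 card_apfst_image inj_sum_embeddings)
  moreover have "endpt (union3 M1 M2 M3) d c = None \<or>
      the (endpt (union3 M1 M2 M3) d c) \<in> verts (union3 M1 M2 M3)"
    if "d \<in> edges (union3 M1 M2 M3)" for d c
    using that endpt_in_verts[OF assms(1)] endpt_in_verts[OF assms(2)] endpt_in_verts[OF assms(3)]
    by (auto simp: edges_union3 verts_union3)
  moreover have "finite (verts (union3 M1 M2 M3))" "finite (edges (union3 M1 M2 M3))"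
    using assms by (simp_all add: is_multipole_def verts_union3 edges_union3)
  ultimately show ?thesis
    by (simp add: is_multipole_def)
qed

lemma free_edges_union3:
  "free_edges (union3 M1 M2 M3) =
     Inl ` free_edges M1 \<union> (Inr \<circ> Inl) ` free_edges M2 \<union> (Inr \<circ> Inr) ` free_edges M3"
  by (auto simp: free_edges_def edges_union3 image_iff) (metis option.distinct(1))+

lemma dangling_union3 [simp]:
  "dangling (union3 M1 M2 M3) (Inl d1) \<longleftrightarrow> dangling M1 d1"
  "dangling (union3 M1 M2 M3) (Inr (Inl d2)) \<longleftrightarrow> dangling M2 d2"
  "dangling (union3 M1 M2 M3) (Inr (Inr d3)) \<longleftrightarrow> dangling M3 d3"
  by (auto simp: dangling_def edges_union3)

lemma None_notin_verts_union3: "None \<notin> verts (union3 M1 M2 M3)"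
  by (auto simp: verts_union3)

section \<open>Connectivity of uncolourable bicritical graphs\<close>

lemma is_graph_endpt:
  assumes "is_graph M" "e \<in> edges M"
  obtains x where "endpt M e b = Some x" "x \<in> verts M"
  using assms unfolding is_graph_def is_multipole_def by (metis option.collapse)

lemma adj_sym: "adj M x y \<Longrightarrow> adj M y x"
  unfolding adj_def by blast

lemma adj_if_endpt: "e \<in> edges M \<Longrightarrow> endpt M e b = Some x \<Longrightarrow> endpt M e (\<not> b) = Some y \<Longrightarrow> adj M x y"
  by (cases b) (auto simp: adj_def)

lemma is_graph_has_neighbour:
  assumes M: "is_graph M" and x: "x \<in> verts M"
  obtains y where "y \<in> verts M" "y \<noteq> x" "adj M x y"
proof -
  have "\<exists>y\<in>verts M. y \<noteq> x \<and> adj M x y"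
  proof (rule ccontr)
    assume no_neighbour: "\<not> (\<exists>y\<in>verts M. y \<noteq> x \<and> adj M x y)"
    have loop: "endpt M e (\<not> b) = Some x" if e: "e \<in> edges M" and ex: "endpt M e b = Some x" for e b
    proof -
      obtain y where y: "endpt M e (\<not> b) = Some y" "y \<in> verts M"
        using is_graph_endpt[OF M e] by blast
      then have "adj M x y"
        using adj_if_endpt e ex by metis
      then show ?thesis
        using y no_neighbour by auto
    qed
    let ?E = "{e \<in> edges M. endpt M e True = Some x}"
    have "(e, b) \<in> ends_at M x \<longleftrightarrow> (e, b) \<in> ?E \<times> UNIV" for e b
      using loop[of e True] loop[of e False] by (cases b) (auto simp: ends_at_def)
    then have "ends_at M x = ?E \<times> UNIV"
      by auto
    moreover have "finite ?E"
      using M by (simp add: is_graph_def is_multipole_def)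
    ultimately have "card (ends_at M x) = 2 * card ?E"
      by (simp add: card_cartesian_product)
    moreover have "card (ends_at M x) = 3"
      using M x by (simp add: is_graph_def is_multipole_def)
    ultimately show False
      by presburger
  qed
  then show thesis
    using that by blast
qed

lemma ex_endpt_in_adj_closed_iff:
  assumes M: "is_graph M" and X: "\<And>x y. adj M x y \<Longrightarrow> x \<in> X \<longleftrightarrow> y \<in> X"
    and e: "e \<in> edges M" and ex: "endpt M e b = Some x"
  shows "(\<exists>b' x'. endpt M e b' = Some x' \<and> x' \<in> X) \<longleftrightarrow> x \<in> X"
proof
  obtain y where y: "endpt M e (\<not> b) = Some y"
    using is_graph_endpt[OF M e] by blast
  assume "\<exists>b' x'. endpt M e b' = Some x' \<and> x' \<in> X"
  then obtain b' x' where x': "endpt M e b' = Some x'" "x' \<in> X"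
    by blast
  then have "x' = x \<or> x' = y"
    using ex y by (cases "b' = b") auto
  then show "x \<in> X"
    using X[OF adj_if_endpt[OF e ex y]] x'(2) by blast
next
  assume "x \<in> X"
  then show "\<exists>b' x'. endpt M e b' = Some x' \<and> x' \<in> X"
    using ex by blast
qed

lemma colouring_off_combine:
  assumes M: "is_graph M" and X: "\<And>x y. adj M x y \<Longrightarrow> x \<in> X \<longleftrightarrow> y \<in> X"
    and \<psi>: "colouring_off M D \<psi>" "D \<inter> X = {}" and \<chi>: "colouring_off M D' \<chi>" "D' \<subseteq> X"
  shows "colouring_off M {} (\<lambda>e. if \<exists>b x. endpt M e b = Some x \<and> x \<in> X then \<psi> e else \<chi> e)"
    (is "colouring_off M {} ?\<phi>")
proof -
  have "?\<phi> e = (if x \<in> X then \<psi> e else \<chi> e)" if "(e, b) \<in> ends_at M x" for e b x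
  proof -
    from that have "e \<in> edges M" "endpt M e b = Some x"
      by (auto simp: ends_at_def)
    then show ?thesis
      by (simp only: ex_endpt_in_adj_closed_iff[OF M X])
  qed
  then have "inj_on (\<lambda>(e, b). ?\<phi> e) (ends_at M x) \<longleftrightarrow>
      inj_on (\<lambda>(e, b). if x \<in> X then \<psi> e else \<chi> e) (ends_at M x)" for x
    by (intro inj_on_cong) auto
  moreover have "inj_on (\<lambda>(e, b). if x \<in> X then \<psi> e else \<chi> e) (ends_at M x)" if "x \<in> verts M" for x
    using \<psi> \<chi> that by (cases "x \<in> X") (auto simp: colouring_off_def)
  ultimately show ?thesis
    using colouring_off_KK[OF \<psi>(1)] colouring_off_KK[OF \<chi>(1)] by (simp add: colouring_off_def)
qed

lemma connected_graph_if_uncolourable_bicritical: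
  assumes M: "is_graph M" and uncolourable: "\<not> colourable M" and nonempty: "verts M \<noteq> {}"
    and critical: "\<forall>x\<in>verts M. \<forall>y\<in>verts M. x \<noteq> y \<longrightarrow> colourable (del_verts M {x, y})"
  shows "connected_graph M"
proof (rule ccontr)
  let ?R = "{(a, b). adj M a b}"
  assume "\<not> connected_graph M"
  then obtain p q where p: "p \<in> verts M" and q: "q \<in> verts M" and "(p, q) \<notin> ?R\<^sup>*"
    using nonempty by (auto simp: connected_graph_def)
  define X where "X = {y. (p, y) \<in> ?R\<^sup>*}"
  have X_adj: "x \<in> X \<longleftrightarrow> y \<in> X" if "adj M x y" for x y
    using that adj_sym[OF that] by (auto simp: X_def intro: rtrancl_into_rtrancl)
  obtain p' where p': "p' \<in> verts M" "p' \<noteq> p" "adj M p p'"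
    using is_graph_has_neighbour[OF M p] .
  obtain q' where q': "q' \<in> verts M" "q' \<noteq> q" "adj M q q'"
    using is_graph_has_neighbour[OF M q] .
  have side: "p \<in> X" "p' \<in> X" "q \<notin> X" "q' \<notin> X"
    using X_adj[OF p'(3)] X_adj[OF q'(3)] \<open>(p, q) \<notin> ?R\<^sup>*\<close> by (auto simp: X_def)
  obtain \<psi> where \<psi>: "colouring_off M {q, q'} \<psi>"
    using critical q q' by (metis colourable_del_verts_iff)
  obtain \<chi> where \<chi>: "colouring_off M {p, p'} \<chi>"
    using critical p p' by (metis colourable_del_verts_iff)
  have "\<exists>\<phi>. colouring_off M {} \<phi>"
    using colouring_off_combine[OF M X_adj \<psi> _ \<chi>] side by blast
  then show False
    using uncolourable by (simp add: colourable_def is_colouring_iff_colouring_off_empty)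
qed

lemma adj_incident:
  assumes "adj M x y"
  obtains e where "incident M e x" "incident M e y"
  using assms unfolding adj_def incident_def by blast

lemma inside_if_incident_two:
  assumes "incident M d x" "incident M d y" "x \<noteq> y" "x \<in> S" "y \<in> S"
  shows "inside M S d"
proof -
  obtain b1 b2 where b: "endpt M d b1 = Some x" "endpt M d b2 = Some y"
    using assms(1,2) by (auto simp: incident_def)
  show ?thesis
    unfolding inside_def
  proof
    fix b
    show "\<exists>x\<in>S. endpt M d b = Some x"
      using b assms(3-5) by (cases b; cases b1; cases b2) auto
  qed
qed

lemma incident_at_most_two:
  assumes "incident M d x" "incident M d y" "incident M d z"
  shows "x = y \<or> x = z \<or> y = z"
proof -
  obtain b1 b2 b3 where "endpt M d b1 = Some x" "endpt M d b2 = Some y" "endpt M d b3 = Some z"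
    using assms by (auto simp: incident_def)
  then show ?thesis
    by (cases b1; cases b2; cases b3) auto
qed

locale negator_pole =
  fixes N :: "('v, 'e) negator"
  assumes is_negator: "is_negator N"
begin

abbreviation "H \<equiv> host N"
abbreviation "S \<equiv> {nu N, nw N, nv N}"
abbreviation "pole \<equiv> neg_pole N"

lemma host_is_graph: "is_graph H"
  using is_negator by (simp add: is_negator_def Let_def snark_def)

lemma host_loop_free: "e \<in> edges H \<Longrightarrow> endpt H e True \<noteq> endpt H e False"
  using is_negator by (simp add: is_negator_def Let_def girth_ge_5_def)

lemma path_verts: "nu N \<in> verts H" "nw N \<in> verts H" "nv N \<in> verts H" "distinct [nu N, nw N, nv N]"
  using is_negator by (simp_all add: is_negator_def Let_def)

lemma path_adj: "adj H (nu N) (nw N)" "adj H (nw N) (nv N)"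
  using is_negator by (simp_all add: is_negator_def Let_def)

lemma semiedges:
  "{ni1 N, ni2 N} = {e. incident H e (nu N) \<and> \<not> inside H S e}" "ni1 N \<noteq> ni2 N"
  "{no1 N, no2 N} = {e. incident H e (nv N) \<and> \<not> inside H S e}" "no1 N \<noteq> no2 N"
  "{nr N} = {e. incident H e (nw N) \<and> \<not> inside H S e}"
  using is_negator by (simp_all add: is_negator_def Let_def)

lemma semiedges_incident:
  "incident H (ni1 N) (nu N)" "incident H (ni2 N) (nu N)"
  "incident H (no1 N) (nv N)" "incident H (no2 N) (nv N)" "incident H (nr N) (nw N)"
  and semiedges_not_inside:
  "\<not> inside H S (ni1 N)" "\<not> inside H S (ni2 N)"
  "\<not> inside H S (no1 N)" "\<not> inside H S (no2 N)" "\<not> inside H S (nr N)"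
  using semiedges(1,3,5) by blast+

lemma semiedges_neq:
  "ni1 N \<noteq> ni2 N" "ni1 N \<noteq> no1 N" "ni1 N \<noteq> no2 N" "ni1 N \<noteq> nr N"
  "ni2 N \<noteq> no1 N" "ni2 N \<noteq> no2 N" "ni2 N \<noteq> nr N"
  "no1 N \<noteq> no2 N" "no1 N \<noteq> nr N" "no2 N \<noteq> nr N"
  using semiedges(2,4) semiedges_incident semiedges_not_inside path_verts(4)
    inside_if_incident_two[of H _ "nu N" "nv N" S] inside_if_incident_two[of H _ "nu N" "nw N" S]
    inside_if_incident_two[of H _ "nv N" "nw N" S]
  by auto

lemma verts_pole: "verts pole = verts H - S"
  and edges_pole: "edges pole = {e \<in> edges H. \<not> inside H S e}"
  and endpt_pole: "endpt pole e b =
    (case endpt H e b of None \<Rightarrow> None | Some x \<Rightarrow> if x \<in> S then None else Some x)"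
  by (simp_all add: neg_pole_def Let_def del_verts_def)

lemma ends_at_pole:
  assumes "x \<notin> S"
  shows "ends_at pole x = ends_at H x"
proof -
  have "endpt pole e b = Some x \<longleftrightarrow> endpt H e b = Some x" for e b
    using assms by (auto simp: endpt_pole split: option.splits)
  moreover have "\<not> inside H S e" if "endpt H e b = Some x" for e b
    using assms that unfolding inside_def by (metis option.inject)
  ultimately show ?thesis
    by (auto simp: ends_at_def edges_pole)
qed

lemma is_multipole_pole: "is_multipole pole"
proof -
  have H: "is_multipole H"
    using host_is_graph by (simp add: is_graph_def)
  have "endpt pole e b = None \<or> the (endpt pole e b) \<in> verts pole" if "e \<in> edges pole" for e b
    using that endpt_in_verts[OF H] by (auto simp: edges_pole endpt_pole verts_pole split: option.splits)
  then show ?thesis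
    using H ends_at_pole by (auto simp: is_multipole_def verts_pole edges_pole)
qed

lemma colouring_off_pole: "colouring_off H D \<phi> \<Longrightarrow> colouring_off pole D \<phi>"
  by (auto simp: colouring_off_def verts_pole edges_pole ends_at_pole)

lemma dangling_pole:
  assumes "incident H d y" "y \<in> S" "\<not> inside H S d"
  shows "dangling pole d"
proof -
  obtain c where c: "d \<in> edges H" "endpt H d c = Some y"
    using assms(1) by (auto simp: incident_def)
  obtain z where z: "endpt H d (\<not> c) = Some z"
    using is_graph_endpt[OF host_is_graph c(1)] by blast
  have "z \<noteq> y"
    using host_loop_free[OF c(1)] c(2) z by (cases c) auto
  then have "z \<notin> S"
    using inside_if_incident_two[of H d y z S] assms c z by (auto simp: incident_def)
  then show ?thesis
    using c z assms(2,3) by (auto simp: dangling_def edges_pole endpt_pole intro!: exI[of _ c])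
qed

lemma semiedges_dangling:
  "dangling pole (ni1 N)" "dangling pole (ni2 N)" "dangling pole (no1 N)" "dangling pole (no2 N)"
  "dangling pole (nr N)"
  using dangling_pole semiedges_incident semiedges_not_inside by auto

lemma free_edges_pole: "free_edges pole = {ni1 N, ni2 N, no1 N, no2 N, nr N}"
proof
  show "free_edges pole \<subseteq> {ni1 N, ni2 N, no1 N, no2 N, nr N}"
  proof
    fix d assume "d \<in> free_edges pole"
    then obtain c where d: "d \<in> edges H" "\<not> inside H S d" "endpt pole d c = None"
      by (auto simp: free_edges_def edges_pole)
    obtain y where "endpt H d c = Some y"
      using is_graph_endpt[OF host_is_graph d(1)] by blast
    with d have "incident H d y" "y \<in> S"
      by (auto simp: incident_def endpt_pole split: if_splits)
    then show "d \<in> {ni1 N, ni2 N, no1 N, no2 N, nr N}"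
      using d(2) semiedges(1,3,5) by auto
  qed
  show "{ni1 N, ni2 N, no1 N, no2 N, nr N} \<subseteq> free_edges pole"
    using semiedges_dangling by (auto simp: dangling_def free_edges_def)
qed

lemma inner_edges:
  obtains euw ewv where
    "incident H euw (nu N)" "incident H euw (nw N)" "incident H ewv (nw N)" "incident H ewv (nv N)"
    "distinct [ni1 N, ni2 N, euw]" "distinct [no1 N, no2 N, ewv]" "distinct [euw, ewv, nr N]"
proof -
  obtain euw where euw: "incident H euw (nu N)" "incident H euw (nw N)"
    using adj_incident[OF path_adj(1)] .
  obtain ewv where ewv: "incident H ewv (nw N)" "incident H ewv (nv N)"
    using adj_incident[OF path_adj(2)] .
  have "inside H S euw" "inside H S ewv"
    using inside_if_incident_two[OF euw] inside_if_incident_two[OF ewv] path_verts(4) by auto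
  moreover have "euw \<noteq> ewv"
    using incident_at_most_two[of H euw "nu N" "nw N" "nv N"] euw ewv path_verts(4) by auto
  ultimately show thesis
    using that euw ewv semiedges(2,4) semiedges_not_inside by auto
qed

lemma boundary_of_host_colouring_off:
  assumes \<phi>: "colouring_off H D \<phi>" and D: "D \<inter> S = {}"
  shows "\<phi> (ni1 N) \<noteq> \<phi> (ni2 N) \<and> \<phi> (no1 N) \<noteq> \<phi> (no2 N) \<and>
    \<phi> (ni1 N) + \<phi> (ni2 N) \<noteq> \<phi> (no1 N) + \<phi> (no2 N) \<and>
    \<phi> (nr N) = (\<phi> (ni1 N) + \<phi> (ni2 N)) + (\<phi> (no1 N) + \<phi> (no2 N))"
proof -
  obtain euw ewv where
    e: "incident H euw (nu N)" "incident H euw (nw N)" "incident H ewv (nw N)" "incident H ewv (nv N)"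
    "distinct [ni1 N, ni2 N, euw]" "distinct [no1 N, no2 N, ewv]" "distinct [euw, ewv, nr N]"
    by (rule inner_edges)
  have u: "nu N \<in> verts H - D" and w: "nw N \<in> verts H - D" and v: "nv N \<in> verts H - D"
    using D path_verts by auto
  have "\<phi> (ni1 N) \<noteq> \<phi> (ni2 N) \<and> \<phi> euw = \<phi> (ni1 N) + \<phi> (ni2 N)"
    using colouring_off_third_eq_add[OF \<phi> u semiedges_incident(1,2) e(1,5)] .
  moreover have "\<phi> (no1 N) \<noteq> \<phi> (no2 N) \<and> \<phi> ewv = \<phi> (no1 N) + \<phi> (no2 N)"
    using colouring_off_third_eq_add[OF \<phi> v semiedges_incident(3,4) e(4,6)] .
  moreover have "\<phi> euw \<noteq> \<phi> ewv \<and> \<phi> (nr N) = \<phi> euw + \<phi> ewv"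
    using colouring_off_third_eq_add[OF \<phi> w e(2,3) semiedges_incident(5) e(7)] .
  ultimately show ?thesis
    by simp
qed

lemma output_boundary_of_host_colouring_off:
  assumes \<phi>: "colouring_off H D \<phi>" and D: "nw N \<notin> D" "nv N \<notin> D"
  shows "\<phi> (no1 N) \<noteq> \<phi> (no2 N) \<and> (\<phi> (nr N) = \<phi> (no1 N) \<or> \<phi> (nr N) = \<phi> (no2 N))"
proof -
  obtain euw ewv where
    e: "incident H euw (nw N)" "incident H ewv (nw N)" "incident H ewv (nv N)"
    "distinct [no1 N, no2 N, ewv]" "distinct [euw, ewv, nr N]"
    by (rule inner_edges)
  have w_in: "nw N \<in> verts H - D" and v_in: "nv N \<in> verts H - D"
    using D path_verts by auto
  have v: "\<phi> (no1 N) \<noteq> \<phi> (no2 N) \<and> \<phi> ewv = \<phi> (no1 N) + \<phi> (no2 N)"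
    using colouring_off_third_eq_add[OF \<phi> v_in semiedges_incident(3,4) e(3,4)] .
  have w: "\<phi> (nr N) = \<phi> euw + \<phi> ewv"
    using colouring_off_third_eq_add[OF \<phi> w_in e(1,2) semiedges_incident(5) e(5)] by blast
  have KK: "\<phi> euw \<in> KK" "\<phi> (no1 N) \<in> KK" "\<phi> (no2 N) \<in> KK" "\<phi> (nr N) \<in> KK"
    using e semiedges_incident colouring_off_KK[OF \<phi>] by (auto simp: incident_def)
  then have "\<phi> (nr N) \<noteq> \<phi> (no1 N) + \<phi> (no2 N)"
    using v w KK_add_ne_right by metis
  then show ?thesis
    using v KK KK_eq_insert by blast
qed

end

section \<open>Boundary tuples\<close>

type_synonym boundary = "colour \<times> colour \<times> colour \<times> colour \<times> colour"

definition perfect_tuples :: "boundary set" where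
  "perfect_tuples =
     {(z, z, a, b, a + b) | z a b. z \<in> KK \<and> a \<in> KK \<and> b \<in> KK \<and> a \<noteq> b} \<union>
     {(a, b, z, z, a + b) | z a b. z \<in> KK \<and> a \<in> KK \<and> b \<in> KK \<and> a \<noteq> b}"

definition boundary_tuples :: "('v, 'e) negator \<Rightarrow> 'v set \<Rightarrow> boundary set" where
  "boundary_tuples N D = {tuple N \<phi> | \<phi>. colouring_off (neg_pole N) D \<phi>}"

definition glueable :: "boundary set \<Rightarrow> boundary set \<Rightarrow> boundary set \<Rightarrow> bool \<Rightarrow> bool" where
  "glueable T1 T2 T3 centre \<longleftrightarrow> (\<exists>a1 a2 b1 b2 c1 c2 r1 r2 r3.
     (a1, a2, b1, b2, r1) \<in> T1 \<and> (b1, b2, c1, c2, r2) \<in> T2 \<and> (c1, c2, a1, a2, r3) \<in> T3 \<and>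
     (centre \<longrightarrow> distinct [r1, r2, r3]))"

lemma glueable_rotate: "glueable T2 T3 T1 centre \<Longrightarrow> glueable T1 T2 T3 centre"
  unfolding glueable_def by fastforce

lemma perfect_tuple_equal_inputs:
  "z \<in> KK \<Longrightarrow> a \<in> KK \<Longrightarrow> b \<in> KK \<Longrightarrow> a \<noteq> b \<Longrightarrow> (z, z, a, b, a + b) \<in> perfect_tuples"
  and perfect_tuple_equal_outputs:
  "z \<in> KK \<Longrightarrow> a \<in> KK \<Longrightarrow> b \<in> KK \<Longrightarrow> a \<noteq> b \<Longrightarrow> (a, b, z, z, a + b) \<in> perfect_tuples"
  unfolding perfect_tuples_def by blast+

lemma perfect_tuple_input_eq_iff: "(x1, x2, y1, y2, r) \<in> perfect_tuples \<Longrightarrow> x1 = x2 \<longleftrightarrow> y1 \<noteq> y2"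
  unfolding perfect_tuples_def by blast

lemma not_glueable_perfect_tuples: "\<not> glueable perfect_tuples perfect_tuples perfect_tuples centre"
proof
  assume "glueable perfect_tuples perfect_tuples perfect_tuples centre"
  then obtain a1 a2 b1 b2 c1 c2 r1 r2 r3 where
    "(a1, a2, b1, b2, r1) \<in> perfect_tuples" "(b1, b2, c1, c2, r2) \<in> perfect_tuples"
    "(c1, c2, a1, a2, r3) \<in> perfect_tuples"
    unfolding glueable_def by blast
  then have "a1 = a2 \<longleftrightarrow> b1 \<noteq> b2" "b1 = b2 \<longleftrightarrow> c1 \<noteq> c2" "c1 = c2 \<longleftrightarrow> a1 \<noteq> a2"
    by (blast dest: perfect_tuple_input_eq_iff)+
  then show False
    by blast
qed

lemma glueable_centre_removed:
  assumes "perfect_tuples \<subseteq> T2" "perfect_tuples \<subseteq> T3"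
    and "(a, a, b, b, r) \<in> T1" "a \<in> KK" "b \<in> KK" "a \<noteq> b"
  shows "glueable T1 T2 T3 False"
proof -
  have ab: "a + b \<in> KK" "a \<noteq> a + b"
    using KK_add[OF assms(4-6)] by auto
  have "(b, b, a, a + b, a + (a + b)) \<in> T2"
    using assms(1) perfect_tuple_equal_inputs[OF assms(5,4) ab] by blast
  moreover have "(a, a + b, a, a, a + (a + b)) \<in> T3"
    using assms(2) perfect_tuple_equal_outputs[OF assms(4,4) ab] by blast
  ultimately show ?thesis
    using assms(3) unfolding glueable_def by blast
qed

lemma glueable_two_removed:
  assumes "perfect_tuples \<subseteq> T2" "perfect_tuples \<subseteq> T3"
    and "(a, b, c, d, (a + b) + (c + d)) \<in> T1" "a \<in> KK" "b \<in> KK" "c \<in> KK" "d \<in> KK"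
    and "a \<noteq> b" "c \<noteq> d" "a + b \<noteq> c + d"
  shows "glueable T1 T2 T3 True"
proof -
  have ab: "a + b \<in> KK" and cd: "c + d \<in> KK"
    using KK_add[OF assms(4,5,8)] KK_add[OF assms(6,7,9)] by auto
  have "(c, d, a, a, c + d) \<in> T2"
    using assms(1) perfect_tuple_equal_outputs[OF assms(4,6,7,9)] by blast
  moreover have "(a, a, a, b, a + b) \<in> T3"
    using assms(2) perfect_tuple_equal_inputs[OF assms(4,4,5,8)] by blast
  moreover have "distinct [(a + b) + (c + d), c + d, a + b]"
    using KK_add[OF ab cd assms(10)] assms(10) by auto
  ultimately show ?thesis
    using assms(3) unfolding glueable_def by blast
qed

lemma glueable_adjacent_removed:
  assumes T1: "\<And>s t. s \<in> KK \<Longrightarrow> t \<in> KK \<Longrightarrow> s \<noteq> t \<Longrightarrow> (s, s, t, t, s) \<in> T1 \<and> (s, s, t, t, t) \<in> T1"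
    and T2: "(p, p, c, d, r) \<in> T2" "p \<in> KK" "c \<in> KK" "d \<in> KK" "c \<noteq> d" "r = c \<or> r = d"
    and T3: "perfect_tuples \<subseteq> T3"
  shows "glueable T1 T2 T3 True"
proof -
  define s where "s = (if r = c then d else c)"
  have cd: "c + d \<noteq> c" "c + d \<noteq> d"
    using KK_add[OF T2(3-5)] by auto
  have s: "s \<in> KK" "s \<noteq> r" "s \<noteq> c + d" "r \<noteq> c + d" "r \<in> KK"
    using T2(3-6) cd unfolding s_def by auto
  show ?thesis
  proof (cases "s = p")
    case False
    have "(s, s, p, p, s) \<in> T1"
      using T1 s(1) T2(2) False by blast
    moreover have "(c, d, s, s, c + d) \<in> T3"
      using T3 perfect_tuple_equal_outputs[OF s(1) T2(3-5)] by blast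
    moreover have "distinct [s, r, c + d]"
      using s by simp
    ultimately show ?thesis
      using T2(1) unfolding glueable_def by blast
  next
    case True
    have "(r, r, p, p, p) \<in> T1"
      using T1 s(5) T2(2) True s(2) by metis
    moreover have "(c, d, r, r, c + d) \<in> T3"
      using T3 perfect_tuple_equal_outputs[OF s(5) T2(3-5)] by blast
    moreover have "distinct [p, r, c + d]"
      using s True by auto
    ultimately show ?thesis
      using T2(1) unfolding glueable_def by blast
  qed
qed

lemma mem_boundary_tuples_iff:
  "t \<in> boundary_tuples N D \<longleftrightarrow> (\<exists>\<phi>. colouring_off (neg_pole N) D \<phi> \<and> tuple N \<phi> = t)"
  by (auto simp: boundary_tuples_def)

lemma boundary_tuples_mono:
  "D \<inter> verts (neg_pole N) \<subseteq> D' \<Longrightarrow> boundary_tuples N D \<subseteq> boundary_tuples N D'"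
  unfolding boundary_tuples_def by (blast intro: colouring_off_mono)

lemma tuple_comp: "tuple N (\<sigma> \<circ> \<phi>) = (\<sigma> (\<phi> (ni1 N)), \<sigma> (\<phi> (ni2 N)), \<sigma> (\<phi> (no1 N)), \<sigma> (\<phi> (no2 N)), \<sigma> (\<phi> (nr N)))"
  by (simp add: tuple_def)

context negator_pole
begin

lemma tuple_KK:
  assumes "colouring_off pole D \<phi>"
  shows "\<phi> (ni1 N) \<in> KK" "\<phi> (ni2 N) \<in> KK" "\<phi> (no1 N) \<in> KK" "\<phi> (no2 N) \<in> KK" "\<phi> (nr N) \<in> KK"
  using colouring_off_KK[OF assms] semiedges_dangling by (simp_all add: dangling_def)

end

locale perfect_feasible_negator = negator_pole +
  assumes perfect: "perfect N" and feasible: "feasible N"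
begin

lemma boundary_tuples_empty: "boundary_tuples N {} = perfect_tuples"
  using perfect by (simp add: perfect_def perfect_tuples_def boundary_tuples_def is_colouring_iff_colouring_off_empty)

lemma perfect_tuples_subset_boundary_tuples: "perfect_tuples \<subseteq> boundary_tuples N D"
  using boundary_tuples_empty boundary_tuples_mono[of "{}" N D] by simp

lemma boundary_tuples_del_one:
  assumes "y \<in> verts pole" "a \<in> KK" "b \<in> KK" "a \<noteq> b"
  shows "(a, a, b, b, a) \<in> boundary_tuples N {y} \<and> (a, a, b, b, b) \<in> boundary_tuples N {y}"
proof -
  obtain \<phi> \<psi> a0 b0 where ab0: "a0 \<in> KK" "b0 \<in> KK" "a0 \<noteq> b0"
    and \<phi>: "colouring_off pole {y} \<phi>" "tuple N \<phi> = (a0, a0, b0, b0, a0)"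
    and \<psi>: "colouring_off pole {y} \<psi>" "tuple N \<psi> = (a0, a0, b0, b0, b0)"
    using feasible assms(1) unfolding feasible_def Let_def is_colouring_del_verts_iff by blast
  obtain \<sigma> where \<sigma>: "inj_on \<sigma> KK" "\<sigma> ` KK \<subseteq> KK" "\<sigma> a0 = a" "\<sigma> b0 = b"
    using KK_permutation_exists[OF ab0 assms(2-4)] .
  have "colouring_off pole {y} (\<sigma> \<circ> \<phi>)" "colouring_off pole {y} (\<sigma> \<circ> \<psi>)"
    using colouring_off_comp \<sigma>(1,2) \<phi>(1) \<psi>(1) by blast+
  moreover have "tuple N (\<sigma> \<circ> \<phi>) = (a, a, b, b, a)" "tuple N (\<sigma> \<circ> \<psi>) = (a, a, b, b, b)"
    using \<phi>(2) \<psi>(2) \<sigma>(3,4) by (simp_all add: tuple_comp tuple_def)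
  ultimately show ?thesis
    unfolding mem_boundary_tuples_iff by blast
qed

lemma boundary_tuples_del_two:
  assumes "x \<in> verts pole" "y \<in> verts pole" "x \<noteq> y"
  obtains a b c d where "(a, b, c, d, (a + b) + (c + d)) \<in> boundary_tuples N {x, y}"
    "a \<in> KK" "b \<in> KK" "c \<in> KK" "d \<in> KK" "a \<noteq> b" "c \<noteq> d" "a + b \<noteq> c + d"
proof -
  obtain \<phi> where \<phi>: "colouring_off H {x, y} \<phi>"
    using feasible assms unfolding feasible_def Let_def colourable_del_verts_iff by blast
  have "{x, y} \<inter> S = {}"
    using assms(1,2) by (auto simp: verts_pole)
  note boundary = boundary_of_host_colouring_off[OF \<phi> this]
  have pole: "colouring_off pole {x, y} \<phi>"
    using colouring_off_pole[OF \<phi>] .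
  then have "tuple N \<phi> \<in> boundary_tuples N {x, y}"
    unfolding boundary_tuples_def by blast
  moreover have "tuple N \<phi> = (\<phi> (ni1 N), \<phi> (ni2 N), \<phi> (no1 N), \<phi> (no2 N),
      (\<phi> (ni1 N) + \<phi> (ni2 N)) + (\<phi> (no1 N) + \<phi> (no2 N)))"
    using boundary by (simp add: tuple_def)
  ultimately show thesis
    using that boundary tuple_KK[OF pole] by simp
qed

lemma boundary_tuples_del_one_input_equal:
  assumes "y \<in> verts pole"
  obtains p c d r where "(p, p, c, d, r) \<in> boundary_tuples N {y}"
    "p \<in> KK" "c \<in> KK" "d \<in> KK" "c \<noteq> d" "r = c \<or> r = d"
proof -
  obtain \<phi> where \<phi>: "colouring_off H {nu N, y} \<phi>" "\<phi> (ni1 N) = \<phi> (ni2 N)"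
    using feasible assms semiedges_incident(1,2) semiedges(2)
    unfolding feasible_def Let_def is_colouring_del_verts_iff by blast
  have "nw N \<notin> {nu N, y}" "nv N \<notin> {nu N, y}"
    using assms path_verts(4) by (auto simp: verts_pole)
  note outputs = output_boundary_of_host_colouring_off[OF \<phi>(1) this]
  have "colouring_off pole {y} \<phi>"
    using colouring_off_mono[OF colouring_off_pole[OF \<phi>(1)]] by (auto simp: verts_pole)
  moreover have "tuple N \<phi> = (\<phi> (ni1 N), \<phi> (ni1 N), \<phi> (no1 N), \<phi> (no2 N), \<phi> (nr N))"
    using \<phi>(2) by (simp add: tuple_def)
  ultimately show thesis
    using that outputs tuple_KK unfolding mem_boundary_tuples_iff by blast
qed

end

section \<open>The graph NNN(N1, N2, N3)\<close>

locale three_negators = n1: negator_pole N1 + n2: negator_pole N2 + n3: negator_pole N3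
  for N1 :: "('v1, 'e1) negator" and N2 :: "('v2, 'e2) negator" and N3 :: "('v3, 'e3) negator"
begin

abbreviation "G \<equiv> NNN N1 N2 N3"
abbreviation "U \<equiv> union3 (neg_pole N1) (neg_pole N2) (neg_pole N3)"
abbreviation "J \<equiv> junction (junction (junction (junction (junction (junction U
     (Inl (no1 N1)) (Inr (Inl (ni1 N2))))
     (Inl (no2 N1)) (Inr (Inl (ni2 N2))))
     (Inr (Inl (no1 N2))) (Inr (Inr (ni1 N3))))
     (Inr (Inl (no2 N2))) (Inr (Inr (ni2 N3))))
     (Inr (Inr (no1 N3))) (Inl (ni1 N1)))
     (Inr (Inr (no2 N3))) (Inl (ni2 N1))"
abbreviation "R \<equiv> {Inl (nr N1), Inr (Inl (nr N2)), Inr (Inr (nr N3))}"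

lemma NNN_eq: "G = add_vertex J None R"
  by (simp add: NNN_def Let_def)

(* Each junction keeps the output edge o, now joining both vertices, and drops the input edge i;
   unjoin gives i back the colour of o, turning colourings of the junctions into colourings of U. *)
definition unjoin :: "('e1 + 'e2 + 'e3 \<Rightarrow> colour) \<Rightarrow> 'e1 + 'e2 + 'e3 \<Rightarrow> colour" where
  "unjoin \<phi> = \<phi>(Inl (ni2 N1) := \<phi> (Inr (Inr (no2 N3))), Inl (ni1 N1) := \<phi> (Inr (Inr (no1 N3))),
     Inr (Inr (ni2 N3)) := \<phi> (Inr (Inl (no2 N2))), Inr (Inr (ni1 N3)) := \<phi> (Inr (Inl (no1 N2))),
     Inr (Inl (ni2 N2)) := \<phi> (Inl (no2 N1)), Inr (Inl (ni1 N2)) := \<phi> (Inl (no1 N1)))"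

lemmas semiedges_neq = n1.semiedges_neq n2.semiedges_neq n3.semiedges_neq
  n1.semiedges_neq[symmetric] n2.semiedges_neq[symmetric] n3.semiedges_neq[symmetric]

lemmas semiedges_dangling =
  n1.semiedges_dangling n2.semiedges_dangling n3.semiedges_dangling

lemma dangling_R: "\<forall>r\<in>R. dangling J r"
  using semiedges_neq by (auto simp: dangling_junction_iff semiedges_dangling)

lemma is_multipole_J: "is_multipole J"
  using n1.is_multipole_pole n2.is_multipole_pole n3.is_multipole_pole semiedges_neq
  by (simp add: is_multipole_junction is_multipole_union3 dangling_junction_iff semiedges_dangling)

lemma None_notin_verts_J: "None \<notin> verts J"
  by (simp add: None_notin_verts_union3)

lemma colouring_off_J: "colouring_off J D \<phi> \<longleftrightarrow> colouring_off U D (unjoin \<phi>)"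
  by (simp add: colouring_off_junction dangling_junction_iff semiedges_dangling semiedges_neq unjoin_def)

lemma colouring_off_NNN:
  "colouring_off G D \<phi> \<longleftrightarrow>
     colouring_off (neg_pole N1) {x. Some (Inl x) \<in> D} (unjoin \<phi> \<circ> Inl) \<and>
     colouring_off (neg_pole N2) {x. Some (Inr (Inl x)) \<in> D} (unjoin \<phi> \<circ> Inr \<circ> Inl) \<and>
     colouring_off (neg_pole N3) {x. Some (Inr (Inr x)) \<in> D} (unjoin \<phi> \<circ> Inr \<circ> Inr) \<and>
     (None \<notin> D \<longrightarrow> distinct [\<phi> (Inl (nr N1)), \<phi> (Inr (Inl (nr N2))), \<phi> (Inr (Inr (nr N3)))])"
proof -
  have "colouring_off G D \<phi> \<longleftrightarrow> colouring_off J D \<phi> \<and> (None \<notin> D \<longrightarrow> inj_on \<phi> R)"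
    unfolding NNN_eq by (rule colouring_off_add_vertex[of J None R, OF is_multipole_J None_notin_verts_J dangling_R])
  moreover have "inj_on \<phi> R \<longleftrightarrow> distinct [\<phi> (Inl (nr N1)), \<phi> (Inr (Inl (nr N2))), \<phi> (Inr (Inr (nr N3)))]"
    by auto
  ultimately show ?thesis
    by (simp add: colouring_off_J colouring_off_union3 comp_assoc)
qed

lemma tuple_unjoin:
  "tuple N1 (unjoin \<phi> \<circ> Inl) = (\<phi> (Inr (Inr (no1 N3))), \<phi> (Inr (Inr (no2 N3))),
     \<phi> (Inl (no1 N1)), \<phi> (Inl (no2 N1)), \<phi> (Inl (nr N1)))"
  "tuple N2 (unjoin \<phi> \<circ> Inr \<circ> Inl) = (\<phi> (Inl (no1 N1)), \<phi> (Inl (no2 N1)),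
     \<phi> (Inr (Inl (no1 N2))), \<phi> (Inr (Inl (no2 N2))), \<phi> (Inr (Inl (nr N2))))"
  "tuple N3 (unjoin \<phi> \<circ> Inr \<circ> Inr) = (\<phi> (Inr (Inl (no1 N2))), \<phi> (Inr (Inl (no2 N2))),
     \<phi> (Inr (Inr (no1 N3))), \<phi> (Inr (Inr (no2 N3))), \<phi> (Inr (Inr (nr N3))))"
  by (simp_all add: tuple_def unjoin_def semiedges_neq)

lemma colourable_del_verts_NNN_iff:
  "colourable (del_verts G D) \<longleftrightarrow>
     glueable (boundary_tuples N1 {x. Some (Inl x) \<in> D}) (boundary_tuples N2 {x. Some (Inr (Inl x)) \<in> D})
       (boundary_tuples N3 {x. Some (Inr (Inr x)) \<in> D}) (None \<notin> D)"
  (is "_ \<longleftrightarrow> glueable (boundary_tuples N1 ?D1) (boundary_tuples N2 ?D2) (boundary_tuples N3 ?D3) _")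
proof
  assume "colourable (del_verts G D)"
  then obtain \<phi> where \<phi>: "colouring_off G D \<phi>"
    by (auto simp: colourable_del_verts_iff)
  then have "tuple N1 (unjoin \<phi> \<circ> Inl) \<in> boundary_tuples N1 ?D1"
    "tuple N2 (unjoin \<phi> \<circ> Inr \<circ> Inl) \<in> boundary_tuples N2 ?D2"
    "tuple N3 (unjoin \<phi> \<circ> Inr \<circ> Inr) \<in> boundary_tuples N3 ?D3"
    by (auto simp: colouring_off_NNN mem_boundary_tuples_iff)
  with \<phi> show "glueable (boundary_tuples N1 ?D1) (boundary_tuples N2 ?D2) (boundary_tuples N3 ?D3) (None \<notin> D)"
    unfolding glueable_def tuple_unjoin colouring_off_NNN by blast
next
  assume "glueable (boundary_tuples N1 ?D1) (boundary_tuples N2 ?D2) (boundary_tuples N3 ?D3) (None \<notin> D)"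
  then obtain \<psi>1 \<psi>2 \<psi>3 a1 a2 b1 b2 c1 c2 r1 r2 r3 where
    \<psi>: "colouring_off (neg_pole N1) ?D1 \<psi>1" "colouring_off (neg_pole N2) ?D2 \<psi>2"
      "colouring_off (neg_pole N3) ?D3 \<psi>3"
    and tuples: "tuple N1 \<psi>1 = (a1, a2, b1, b2, r1)" "tuple N2 \<psi>2 = (b1, b2, c1, c2, r2)"
      "tuple N3 \<psi>3 = (c1, c2, a1, a2, r3)"
    and centre: "None \<notin> D \<longrightarrow> distinct [r1, r2, r3]"
    unfolding glueable_def mem_boundary_tuples_iff by blast
  define \<phi> where "\<phi> = case_sum \<psi>1 (case_sum \<psi>2 \<psi>3)"
  have "unjoin \<phi> \<circ> Inl = \<psi>1" "unjoin \<phi> \<circ> Inr \<circ> Inl = \<psi>2" "unjoin \<phi> \<circ> Inr \<circ> Inr = \<psi>3"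
    using tuples by (auto simp: fun_eq_iff unjoin_def \<phi>_def tuple_def semiedges_neq)
  moreover have "\<phi> (Inl (nr N1)) = r1" "\<phi> (Inr (Inl (nr N2))) = r2" "\<phi> (Inr (Inr (nr N3))) = r3"
    using tuples by (simp_all add: \<phi>_def tuple_def)
  ultimately have "colouring_off G D \<phi>"
    using \<psi> centre by (simp add: colouring_off_NNN)
  then show "colourable (del_verts G D)"
    by (auto simp: colourable_del_verts_iff)
qed

lemma is_graph_NNN: "is_graph G"
proof -
  have "free_edges J = free_edges U -
      {Inl (no1 N1), Inr (Inl (ni1 N2)), Inl (no2 N1), Inr (Inl (ni2 N2)),
       Inr (Inl (no1 N2)), Inr (Inr (ni1 N3)), Inr (Inl (no2 N2)), Inr (Inr (ni2 N3)),
       Inr (Inr (no1 N3)), Inl (ni1 N1), Inr (Inr (no2 N3)), Inl (ni2 N1)}"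
    using semiedges_neq by (simp add: free_edges_junction dangling_junction_iff semiedges_dangling) blast
  then have "free_edges G = {}"
    by (auto simp: NNN_eq free_edges_add_vertex free_edges_union3
        n1.free_edges_pole n2.free_edges_pole n3.free_edges_pole)
  moreover have "card R = 3"
    by simp
  then have "is_multipole G"
    unfolding NNN_eq by (rule is_multipole_add_vertex[of J None R, OF is_multipole_J None_notin_verts_J dangling_R])
  ultimately show ?thesis
    by (simp add: is_graph_iff_free_edges)
qed

lemma verts_NNN:
  "verts G = insert None ((Some \<circ> Inl) ` verts (neg_pole N1) \<union>
     (Some \<circ> Inr \<circ> Inl) ` verts (neg_pole N2) \<union> (Some \<circ> Inr \<circ> Inr) ` verts (neg_pole N3))"
  by (simp add: NNN_eq verts_union3)

end

locale three_perfect_feasible_negators = three_negators N1 N2 N3 +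
  p1: perfect_feasible_negator N1 + p2: perfect_feasible_negator N2 + p3: perfect_feasible_negator N3
  for N1 :: "('v1, 'e1) negator" and N2 :: "('v2, 'e2) negator" and N3 :: "('v3, 'e3) negator"
begin

lemma colourable_NNN_iff: "colourable G \<longleftrightarrow> colourable (del_verts G {})"
  by (simp add: colourable_del_verts_iff colourable_def[of G] is_colouring_iff_colouring_off_empty)

lemma not_colourable_NNN: "\<not> colourable G"
  unfolding colourable_NNN_iff colourable_del_verts_NNN_iff
  using not_glueable_perfect_tuples
  by (simp add: p1.boundary_tuples_empty p2.boundary_tuples_empty p3.boundary_tuples_empty)

lemma KK_01_10: "(0, 1) \<in> KK" "(1, 0) \<in> KK" "((0, 1) :: colour) \<noteq> (1, 0)"
  by (simp_all add: KK_def)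

lemmas perfect_tuples_subset =
  p1.perfect_tuples_subset_boundary_tuples p2.perfect_tuples_subset_boundary_tuples
  p3.perfect_tuples_subset_boundary_tuples

lemma glueable_del_centre:
  "a \<in> verts (neg_pole N1) \<Longrightarrow>
     glueable (boundary_tuples N1 {a}) (boundary_tuples N2 {}) (boundary_tuples N3 {}) False"
  "b \<in> verts (neg_pole N2) \<Longrightarrow>
     glueable (boundary_tuples N1 {}) (boundary_tuples N2 {b}) (boundary_tuples N3 {}) False"
  "c \<in> verts (neg_pole N3) \<Longrightarrow>
     glueable (boundary_tuples N1 {}) (boundary_tuples N2 {}) (boundary_tuples N3 {c}) False"
proof -
  note centre = glueable_centre_removed[OF _ _ conjunct1 KK_01_10]
  show "glueable (boundary_tuples N1 {a}) (boundary_tuples N2 {}) (boundary_tuples N3 {}) False"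
    if "a \<in> verts (neg_pole N1)"
    by (rule centre[OF perfect_tuples_subset(2,3) p1.boundary_tuples_del_one[OF that KK_01_10]])
  show "glueable (boundary_tuples N1 {}) (boundary_tuples N2 {b}) (boundary_tuples N3 {}) False"
    if "b \<in> verts (neg_pole N2)"
    by (rule glueable_rotate,
        rule centre[OF perfect_tuples_subset(3,1) p2.boundary_tuples_del_one[OF that KK_01_10]])
  show "glueable (boundary_tuples N1 {}) (boundary_tuples N2 {}) (boundary_tuples N3 {c}) False"
    if "c \<in> verts (neg_pole N3)"
    by (rule glueable_rotate, rule glueable_rotate,
        rule centre[OF perfect_tuples_subset(1,2) p3.boundary_tuples_del_one[OF that KK_01_10]])
qed

lemma glueable_del_same_pole:
  "a \<in> verts (neg_pole N1) \<Longrightarrow> a' \<in> verts (neg_pole N1) \<Longrightarrow> a \<noteq> a' \<Longrightarrow>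
     glueable (boundary_tuples N1 {a, a'}) (boundary_tuples N2 {}) (boundary_tuples N3 {}) True"
  "b \<in> verts (neg_pole N2) \<Longrightarrow> b' \<in> verts (neg_pole N2) \<Longrightarrow> b \<noteq> b' \<Longrightarrow>
     glueable (boundary_tuples N1 {}) (boundary_tuples N2 {b, b'}) (boundary_tuples N3 {}) True"
  "c \<in> verts (neg_pole N3) \<Longrightarrow> c' \<in> verts (neg_pole N3) \<Longrightarrow> c \<noteq> c' \<Longrightarrow>
     glueable (boundary_tuples N1 {}) (boundary_tuples N2 {}) (boundary_tuples N3 {c, c'}) True"
proof -
  show "glueable (boundary_tuples N1 {a, a'}) (boundary_tuples N2 {}) (boundary_tuples N3 {}) True"
    if "a \<in> verts (neg_pole N1)" "a' \<in> verts (neg_pole N1)" "a \<noteq> a'" for a a'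
    by (rule p1.boundary_tuples_del_two[OF that], rule glueable_two_removed[OF perfect_tuples_subset(2,3)])
  show "glueable (boundary_tuples N1 {}) (boundary_tuples N2 {b, b'}) (boundary_tuples N3 {}) True"
    if "b \<in> verts (neg_pole N2)" "b' \<in> verts (neg_pole N2)" "b \<noteq> b'" for b b'
    by (rule glueable_rotate, rule p2.boundary_tuples_del_two[OF that],
        rule glueable_two_removed[OF perfect_tuples_subset(3,1)])
  show "glueable (boundary_tuples N1 {}) (boundary_tuples N2 {}) (boundary_tuples N3 {c, c'}) True"
    if "c \<in> verts (neg_pole N3)" "c' \<in> verts (neg_pole N3)" "c \<noteq> c'" for c c'
    by (rule glueable_rotate, rule glueable_rotate, rule p3.boundary_tuples_del_two[OF that],
        rule glueable_two_removed[OF perfect_tuples_subset(1,2)])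
qed

lemma glueable_del_adjacent_poles:
  "a \<in> verts (neg_pole N1) \<Longrightarrow> b \<in> verts (neg_pole N2) \<Longrightarrow>
     glueable (boundary_tuples N1 {a}) (boundary_tuples N2 {b}) (boundary_tuples N3 {}) True"
  "b \<in> verts (neg_pole N2) \<Longrightarrow> c \<in> verts (neg_pole N3) \<Longrightarrow>
     glueable (boundary_tuples N1 {}) (boundary_tuples N2 {b}) (boundary_tuples N3 {c}) True"
  "c \<in> verts (neg_pole N3) \<Longrightarrow> a \<in> verts (neg_pole N1) \<Longrightarrow>
     glueable (boundary_tuples N1 {a}) (boundary_tuples N2 {}) (boundary_tuples N3 {c}) True"
proof -
  show "glueable (boundary_tuples N1 {a}) (boundary_tuples N2 {b}) (boundary_tuples N3 {}) True"
    if "a \<in> verts (neg_pole N1)" "b \<in> verts (neg_pole N2)" for a b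
    by (rule p2.boundary_tuples_del_one_input_equal[OF that(2)],
        rule glueable_adjacent_removed[OF p1.boundary_tuples_del_one[OF that(1)] _ _ _ _ _ _ perfect_tuples_subset(3)])
  show "glueable (boundary_tuples N1 {}) (boundary_tuples N2 {b}) (boundary_tuples N3 {c}) True"
    if "b \<in> verts (neg_pole N2)" "c \<in> verts (neg_pole N3)" for b c
    by (rule glueable_rotate, rule p3.boundary_tuples_del_one_input_equal[OF that(2)],
        rule glueable_adjacent_removed[OF p2.boundary_tuples_del_one[OF that(1)] _ _ _ _ _ _ perfect_tuples_subset(1)])
  show "glueable (boundary_tuples N1 {a}) (boundary_tuples N2 {}) (boundary_tuples N3 {c}) True"
    if "c \<in> verts (neg_pole N3)" "a \<in> verts (neg_pole N1)" for c a
    by (rule glueable_rotate, rule glueable_rotate, rule p1.boundary_tuples_del_one_input_equal[OF that(2)],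
        rule glueable_adjacent_removed[OF p3.boundary_tuples_del_one[OF that(1)] _ _ _ _ _ _ perfect_tuples_subset(2)])
qed

lemma verts_NNN_cases:
  assumes "x \<in> verts G"
  obtains (centre) "x = None"
    | (pole1) a where "a \<in> verts (neg_pole N1)" "x = Some (Inl a)"
    | (pole2) b where "b \<in> verts (neg_pole N2)" "x = Some (Inr (Inl b))"
    | (pole3) c where "c \<in> verts (neg_pole N3)" "x = Some (Inr (Inr c))"
  using assms unfolding verts_NNN by auto

lemma colourable_del_two_NNN:
  assumes "x \<in> verts G" "y \<in> verts G" "x \<noteq> y"
  shows "colourable (del_verts G {x, y})"
  using assms(3)
  by (cases rule: verts_NNN_cases[OF assms(1)]; cases rule: verts_NNN_cases[OF assms(2)])
    (simp_all add: colourable_del_verts_NNN_iff Collect_disj_eq glueable_del_centre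
      glueable_del_same_pole glueable_del_adjacent_poles)

end

theorem theorem15:
  fixes N1 :: "('v1, 'e1) negator" and N2 :: "('v2, 'e2) negator"
    and N3 :: "('v3, 'e3) negator"
  assumes "is_negator N1" "perfect N1" "feasible N1"
      and "is_negator N2" "perfect N2" "feasible N2"
      and "is_negator N3" "perfect N3" "feasible N3"
  shows "bicritical (NNN N1 N2 N3)"
proof -
  interpret three_perfect_feasible_negators N1 N2 N3
    by unfold_locales (use assms in simp_all)
  have critical: "\<forall>x\<in>verts G. \<forall>y\<in>verts G. x \<noteq> y \<longrightarrow> colourable (del_verts G {x, y})"
    using colourable_del_two_NNN by blast
  moreover have "connected_graph G"
    using connected_graph_if_uncolourable_bicritical[OF is_graph_NNN not_colourable_NNN _ critical]
    by (simp add: verts_NNN)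
  ultimately show ?thesis
    using is_graph_NNN not_colourable_NNN by (simp add: bicritical_def snark_def)
qed

end
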